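(* Let $f\colon\mathbb R\to\mathbb R$ be continuous with $|f(x)|\leqslant a\cosh(bx)$ for all $x$, for some $a>0$, $b\in\mathbb R$. Fix $\lambda>0$. Let $\rho$ be a compactly supported Borel probability measure on $\mathbb R$, let $d>0$ be such that $\operatorname{supp}\rho\subset[-d,d]$, and for $n\geqslant1$ let $I^\rho_n=[-nd,nd]$, whose length is $L(I^\rho_n)=2nd$. Then for every $\epsilon>0$ there exists $n_0>0$ such that, for every $x\in\operatorname{supp}\rho$, $$\sum_{n=n_0}^\infty\frac{e^{-\lambda}\lambda^n}{(n+1)!}\Big\langle\delta_x*\rho^{*n},\ |f|+\epsilon+a\cosh\big(bL(I^\rho_{n_0})\big)\Big\rangle<\epsilon,$$ and $$\sum_{n=n_0}^\infty\frac{e^{-\lambda}\lambda^n}{(n+1)!}\Big\langle\rho^{*(n+1)},\ |f|+\epsilon+a\cosh\big(bL(I^\rho_{n_0})\big)\Big\rangle<\epsilon.$$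
   Context: $\langle\tau,\phi\rangle=\int\phi\,d\tau$; $*$ is convolution of measures, $\rho^{*n}$ the $n$-th convolution power with $\rho^{*0}=\delta_0$; $\delta_a$ is the Dirac measure at $a$. *)

theory Defs
  imports "HOL-Probability.Probability"
begin

definition measure_support :: "real measure \<Rightarrow> real set" where
  "measure_support M = {x. \<forall>e>0. emeasure M (ball x e) > 0}"

fun conv_pow :: "real measure \<Rightarrow> nat \<Rightarrow> real measure" where
  "conv_pow M 0 = return borel 0"
| "conv_pow M (Suc n) = convolution M (conv_pow M n)"

end

theory Submission imports Defs begin

text \<open>Since the support of \<open>\<rho>\<close> lies in \<open>[-d, d]\<close>, both \<open>\<delta>\<^sub>x * \<rho>\<^sup>*\<^sup>n\<close> (for \<open>x\<close> in the
  support) and \<open>\<rho>\<^sup>*\<^sup>(\<^sup>n\<^sup>+\<^sup>1\<^sup>)\<close> are concentrated on \<open>[-(n+1)d, (n+1)d]\<close>. Because \<open>cosh\<close>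
  grows at most exponentially, for \<open>n \<ge> n\<^sub>0\<close> the integrand is bounded there by
  \<open>(2a + \<epsilon>) w\<^sup>n\<^sup>+\<^sup>1\<close> with \<open>w = e\<^sup>2\<^sup>|\<^sup>b\<^sup>|\<^sup>d\<close>. So the \<open>n\<close>-th summand is at most a fixed multiple of
  the \<open>(n+1)\<close>-st term of the exponential series of \<open>\<lambda> w\<close>, whose tails tend to \<open>0\<close>.\<close>

lemma prob_space_convolution:
  fixes M N :: "'a::ordered_euclidean_space measure"
  assumes "prob_space M" "prob_space N" "sets M = sets borel" "sets N = sets borel"
  shows "prob_space (M \<star> N)"
proof -
  interpret pair_prob_space M N
    using assms by (simp add: pair_prob_space_def pair_sigma_finite_def prob_space_imp_sigma_finite)
  have sets_MN: "sets (M \<Otimes>\<^sub>M N) = sets (borel \<Otimes>\<^sub>M borel)"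
    by (rule sets_pair_measure_cong) (simp_all only: assms(3,4))
  show ?thesis
    unfolding convolution_def
    by (rule prob_space_distr) (simp add: measurable_cong_sets[OF sets_MN refl])
qed

lemma AE_convolution_abs_le:
  fixes M N :: "real measure"
  assumes "prob_space M" "prob_space N" "sets M = sets borel" "sets N = sets borel"
    and "AE x in M. \<bar>x\<bar> \<le> r" "AE y in N. \<bar>y\<bar> \<le> s"
  shows "AE z in M \<star> N. \<bar>z\<bar> \<le> r + s"
proof -
  interpret pair_prob_space M N
    using assms by (simp add: pair_prob_space_def pair_sigma_finite_def prob_space_imp_sigma_finite)
  have sets_MN: "sets (M \<Otimes>\<^sub>M N) = sets (borel \<Otimes>\<^sub>M borel)"
    by (rule sets_pair_measure_cong) (simp_all only: assms(3,4))
  have "AE p in M \<Otimes>\<^sub>M N. \<bar>fst p + snd p\<bar> \<le> r + s"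
  proof (rule AE_pair_measure)
    have "(\<lambda>p. \<bar>fst p + snd p\<bar> \<le> r + s) \<in> measurable (borel \<Otimes>\<^sub>M borel) (count_space UNIV)"
      by measurable
    then have "(\<lambda>p. \<bar>fst p + snd p\<bar> \<le> r + s) \<in> measurable (M \<Otimes>\<^sub>M N) (count_space UNIV)"
      by (subst measurable_cong_sets[OF sets_MN refl])
    then show "{p \<in> space (M \<Otimes>\<^sub>M N). \<bar>fst p + snd p\<bar> \<le> r + s} \<in> sets (M \<Otimes>\<^sub>M N)"
      by (simp only: pred_def)
    show "AE x in M. AE y in N. \<bar>fst (x, y) + snd (x, y)\<bar> \<le> r + s"
      using assms(5)
    proof eventually_elim
      case (elim x)
      show ?case using assms(6) by eventually_elim (use elim in auto)
    qed
  qed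
  then show ?thesis
    unfolding convolution_def
    by (subst AE_distr_iff) (auto simp: case_prod_beta measurable_cong_sets[OF sets_MN refl])
qed

lemma sets_conv_pow [simp]: "sets (conv_pow M n) = sets borel"
  by (cases n) simp_all

lemma prob_space_conv_pow:
  assumes "prob_space M" "sets M = sets borel"
  shows "prob_space (conv_pow M n)"
  by (induction n) (simp_all add: prob_space_return prob_space_convolution assms)

lemma AE_conv_pow_abs_le:
  assumes "prob_space M" "sets M = sets borel" "AE y in M. \<bar>y\<bar> \<le> d"
  shows "AE y in conv_pow M n. \<bar>y\<bar> \<le> real n * d"
proof (induction n)
  case 0
  show ?case unfolding conv_pow.simps by (subst AE_return) auto
next
  case (Suc n)
  have "AE y in conv_pow M (Suc n). \<bar>y\<bar> \<le> d + real n * d"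
    unfolding conv_pow.simps
    using AE_convolution_abs_le[OF assms(1) prob_space_conv_pow[OF assms(1,2)] assms(2)
        sets_conv_pow assms(3) Suc.IH] .
  then show ?case by (simp add: algebra_simps)
qed

lemma AE_shifted_conv_pow_abs_le:
  assumes "prob_space M" "sets M = sets borel" "AE y in M. \<bar>y\<bar> \<le> d" "\<bar>x\<bar> \<le> d"
  shows "AE y in return borel x \<star> conv_pow M n. \<bar>y\<bar> \<le> real (n + 1) * d"
proof -
  have "AE y in return borel x. \<bar>y\<bar> \<le> d"
    using assms(4) by (subst AE_return) auto
  then have "AE y in return borel x \<star> conv_pow M n. \<bar>y\<bar> \<le> d + real n * d"
    using AE_convolution_abs_le[OF prob_space_return prob_space_conv_pow[OF assms(1,2)]
        sets_return sets_conv_pow _ AE_conv_pow_abs_le[OF assms(1-3)]] by simp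
  then show ?thesis by (simp add: algebra_simps)
qed

lemma AE_abs_le_of_measure_support:
  fixes M :: "real measure"
  assumes "sets M = sets borel" "measure_support M \<subseteq> {-d..d}"
  shows "AE y in M. \<bar>y\<bar> \<le> d"
proof -
  define F where "F = {ball x e | x e. e > 0 \<and> emeasure M (ball x e) = 0}"
  obtain F' where F': "F' \<subseteq> F" "countable F'" "\<Union>F' = \<Union>F"
    using Lindelof[of F] unfolding F_def by auto
  have "(\<Union>B\<in>F'. B) \<in> null_sets M"
    using F'(1,2) assms(1) unfolding F_def by (intro null_sets_UN') (auto simp: null_sets_def)
  moreover have "{y \<in> space M. \<not> \<bar>y\<bar> \<le> d} \<subseteq> (\<Union>B\<in>F'. B)"
  proof
    fix y assume "y \<in> {y \<in> space M. \<not> \<bar>y\<bar> \<le> d}"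
    then have "y \<notin> measure_support M" using assms(2) by (auto simp: abs_le_iff)
    then obtain e where "e > 0" "emeasure M (ball y e) = 0"
      unfolding measure_support_def by (auto simp: not_less)
    then have "ball y e \<in> F" unfolding F_def by auto
    then have "y \<in> \<Union>F" using \<open>e > 0\<close> by (metis UnionI centre_in_ball)
    then show "y \<in> (\<Union>B\<in>F'. B)" using F'(3) by simp
  qed
  ultimately show ?thesis by (rule AE_I')
qed

lemma cosh_le_exp_power:
  fixes x c :: real
  assumes "\<bar>x\<bar> \<le> real m * c"
  shows "cosh x \<le> exp c ^ m"
proof -
  have "cosh x \<le> exp \<bar>x\<bar>"
    unfolding cosh_def by (cases "x \<ge> 0") (auto simp: field_simps)
  also have "\<dots> \<le> exp (real m * c)" using assms by simp
  finally show ?thesis by (simp add: exp_of_nat_mult)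
qed

lemma (in prob_space) nn_integral_le_of_AE_le:
  assumes "AE x in M. f x \<le> c"
  shows "(\<integral>\<^sup>+ x. f x \<partial>M) \<le> c"
proof -
  have "(\<integral>\<^sup>+ x. f x \<partial>M) \<le> (\<integral>\<^sup>+ x. c \<partial>M)" using assms by (rule nn_integral_mono_AE)
  then show ?thesis by (simp add: emeasure_space_1)
qed

lemma eventually_exp_series_tail_less:
  fixes z C \<epsilon> :: real
  assumes "z \<ge> 0" "C \<ge> 0" "\<epsilon> > 0"
  shows "\<forall>\<^sub>F N in sequentially. (\<Sum>k. ennreal (C * (z ^ (k + N) / fact (k + N)))) < ennreal \<epsilon>"
proof -
  define g where "g m = C * (z ^ m / fact m)" for m
  have "summable g"
    unfolding g_def using summable_exp[of z] by (intro summable_mult) (simp add: field_simps)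
  then have "(\<lambda>N. \<Sum>k. g (k + N)) \<longlonglongrightarrow> 0" by (rule suminf_exist_split2)
  then have "\<forall>\<^sub>F N in sequentially. (\<Sum>k. g (k + N)) < \<epsilon>"
    using assms(3) by (rule order_tendstoD)
  then show ?thesis
  proof eventually_elim
    case (elim N)
    have "(\<Sum>k. ennreal (g (k + N))) = ennreal (\<Sum>k. g (k + N))"
      using \<open>summable g\<close> assms(1,2) unfolding g_def
      by (intro suminf_ennreal2 summable_ignore_initial_segment) auto
    with elim show ?case using assms(3) by (simp add: g_def ennreal_lessI)
  qed
qed

lemma poisson_weighted_integral_le:
  fixes f :: "real \<Rightarrow> real"
  assumes "prob_space \<mu>" "AE y in \<mu>. \<bar>y\<bar> \<le> real (n + 1) * d"
    and "\<And>y. \<bar>f y\<bar> \<le> a * cosh (b * y)"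
    and "n0 \<le> n" "d \<ge> 0" "a \<ge> 0" "\<epsilon> \<ge> 0" "lam > 0"
  shows "ennreal (exp (-lam) * lam ^ n / fact (n + 1)) *
      (\<integral>\<^sup>+ y. ennreal (\<bar>f y\<bar> + \<epsilon> + a * cosh (b * (2 * real n0 * d))) \<partial>\<mu>)
    \<le> ennreal (exp (-lam) * (2 * a + \<epsilon>) / lam *
      ((lam * exp (2 * \<bar>b\<bar> * d)) ^ (n + 1) / fact (n + 1)))"
proof -
  define E where "E = exp (2 * \<bar>b\<bar> * d) ^ (n + 1)"
  have "1 \<le> E" unfolding E_def using assms(5) by (intro one_le_power) simp
  have integrand_le: "\<bar>f y\<bar> + \<epsilon> + a * cosh (b * (2 * real n0 * d)) \<le> (2 * a + \<epsilon>) * E"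
    if "\<bar>y\<bar> \<le> real (n + 1) * d" for y
  proof -
    have "\<bar>b * y\<bar> \<le> \<bar>b\<bar> * (real (n + 1) * d)"
      unfolding abs_mult using that by (simp add: mult_left_mono)
    also have "\<dots> \<le> real (n + 1) * (2 * \<bar>b\<bar> * d)"
      using assms(5) by simp
    finally have "a * cosh (b * y) \<le> a * E"
      unfolding E_def using assms(6) by (intro mult_left_mono cosh_le_exp_power)
    have "\<bar>b * (2 * real n0 * d)\<bar> = real n0 * (2 * \<bar>b\<bar> * d)"
      using assms(5) by (simp add: abs_mult)
    also have "\<dots> \<le> real (n + 1) * (2 * \<bar>b\<bar> * d)"
      using assms(4,5) by (intro mult_right_mono) auto
    finally have "a * cosh (b * (2 * real n0 * d)) \<le> a * E"
      unfolding E_def using assms(6) by (intro mult_left_mono cosh_le_exp_power)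
    moreover have "\<bar>f y\<bar> \<le> a * E"
      using assms(3) \<open>a * cosh (b * y) \<le> a * E\<close> by (rule order_trans)
    moreover have "\<epsilon> \<le> \<epsilon> * E" using mult_left_mono[OF \<open>1 \<le> E\<close> assms(7)] by simp
    ultimately show ?thesis by (simp add: algebra_simps)
  qed
  have "AE y in \<mu>. ennreal (\<bar>f y\<bar> + \<epsilon> + a * cosh (b * (2 * real n0 * d))) \<le> ennreal ((2 * a + \<epsilon>) * E)"
    using assms(2) by eventually_elim (intro ennreal_leI integrand_le)
  then have integral_le:
    "(\<integral>\<^sup>+ y. ennreal (\<bar>f y\<bar> + \<epsilon> + a * cosh (b * (2 * real n0 * d))) \<partial>\<mu>) \<le> ennreal ((2 * a + \<epsilon>) * E)"
    by (rule prob_space.nn_integral_le_of_AE_le[OF assms(1)])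
  have weight_eq: "exp (-lam) * lam ^ n / fact (n + 1) * ((2 * a + \<epsilon>) * w ^ (n + 1))
    = exp (-lam) * (2 * a + \<epsilon>) / lam * ((lam * w) ^ (n + 1) / fact (n + 1))" for w
    using assms(8) by (simp add: power_mult_distrib)
  from integral_le have "ennreal (exp (-lam) * lam ^ n / fact (n + 1)) *
      (\<integral>\<^sup>+ y. ennreal (\<bar>f y\<bar> + \<epsilon> + a * cosh (b * (2 * real n0 * d))) \<partial>\<mu>)
    \<le> ennreal (exp (-lam) * lam ^ n / fact (n + 1)) * ennreal ((2 * a + \<epsilon>) * E)"
    by (rule mult_left_mono) simp
  also have "\<dots> = ennreal (exp (-lam) * lam ^ n / fact (n + 1) * ((2 * a + \<epsilon>) * E))"
    using assms(6-8) \<open>1 \<le> E\<close> by (subst ennreal_mult) auto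
  also have "\<dots> = ennreal (exp (-lam) * (2 * a + \<epsilon>) / lam *
      ((lam * exp (2 * \<bar>b\<bar> * d)) ^ (n + 1) / fact (n + 1)))"
    unfolding E_def by (rule arg_cong[where f = ennreal, OF weight_eq])
  finally show ?thesis .
qed

lemma poisson_weighted_series_le:
  fixes f :: "real \<Rightarrow> real" and \<mu> :: "nat \<Rightarrow> real measure"
  assumes "\<And>k. prob_space (\<mu> k)" "\<And>k. AE y in \<mu> k. \<bar>y\<bar> \<le> real (k + n0 + 1) * d"
    and "\<And>y. \<bar>f y\<bar> \<le> a * cosh (b * y)"
    and "d \<ge> 0" "a \<ge> 0" "\<epsilon> \<ge> 0" "lam > 0"
  shows "(\<Sum>k. ennreal (exp (-lam) * lam ^ (k + n0) / fact (k + n0 + 1)) *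
      (\<integral>\<^sup>+ y. ennreal (\<bar>f y\<bar> + \<epsilon> + a * cosh (b * (2 * real n0 * d))) \<partial>\<mu> k))
    \<le> (\<Sum>k. ennreal (exp (-lam) * (2 * a + \<epsilon>) / lam *
      ((lam * exp (2 * \<bar>b\<bar> * d)) ^ (k + n0 + 1) / fact (k + n0 + 1))))"
  using assms(4-) by (intro suminf_le summableI poisson_weighted_integral_le[OF assms(1,2,3)]) simp_all

theorem lemma2:
  fixes f :: "real \<Rightarrow> real" and a b lam d :: real and rho :: "real measure"
  assumes "continuous_on UNIV f"
    and "a > 0"
    and "\<And>x. \<bar>f x\<bar> \<le> a * cosh (b * x)"
    and "lam > 0"
    and "prob_space rho" and "sets rho = sets borel"
    and "compact (measure_support rho)"
    and "d > 0" and "measure_support rho \<subseteq> {-d..d}"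
  shows "\<forall>\<epsilon>>0. \<exists>n0::nat. n0 > 0 \<and>
     (\<forall>x\<in>measure_support rho.
        (\<Sum>k. ennreal (exp (-lam) * lam ^ (k + n0) / fact (k + n0 + 1)) *
           (\<integral>\<^sup>+ y. ennreal (\<bar>f y\<bar> + \<epsilon> + a * cosh (b * (2 * real n0 * d)))
              \<partial>(convolution (return borel x) (conv_pow rho (k + n0))))) < ennreal \<epsilon>) \<and>
     (\<Sum>k. ennreal (exp (-lam) * lam ^ (k + n0) / fact (k + n0 + 1)) *
           (\<integral>\<^sup>+ y. ennreal (\<bar>f y\<bar> + \<epsilon> + a * cosh (b * (2 * real n0 * d)))
              \<partial>(conv_pow rho (k + n0 + 1)))) < ennreal \<epsilon>"
proof (intro allI impI)
  fix \<epsilon> :: real assume "\<epsilon> > 0"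
  define C where "C = exp (-lam) * (2 * a + \<epsilon>) / lam"
  define z where "z = lam * exp (2 * \<bar>b\<bar> * d)"
  have "z \<ge> 0" "C \<ge> 0"
    unfolding z_def C_def using assms(2,4) \<open>\<epsilon> > 0\<close> by simp_all
  then obtain N where tail: "\<And>n. n \<ge> N \<Longrightarrow> (\<Sum>k. ennreal (C * (z ^ (k + n) / fact (k + n)))) < ennreal \<epsilon>"
    using eventually_exp_series_tail_less \<open>\<epsilon> > 0\<close> unfolding eventually_sequentially by meson
  define n0 where "n0 = Suc N"
  have series_less: "(\<Sum>k. ennreal (exp (-lam) * lam ^ (k + n0) / fact (k + n0 + 1)) *
      (\<integral>\<^sup>+ y. ennreal (\<bar>f y\<bar> + \<epsilon> + a * cosh (b * (2 * real n0 * d))) \<partial>\<mu> k)) < ennreal \<epsilon>"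
    if "\<And>k. prob_space (\<mu> k)" "\<And>k. AE y in \<mu> k. \<bar>y\<bar> \<le> real (k + n0 + 1) * d" for \<mu>
  proof -
    have "(\<Sum>k. ennreal (exp (-lam) * lam ^ (k + n0) / fact (k + n0 + 1)) *
        (\<integral>\<^sup>+ y. ennreal (\<bar>f y\<bar> + \<epsilon> + a * cosh (b * (2 * real n0 * d))) \<partial>\<mu> k))
      \<le> (\<Sum>k. ennreal (C * (z ^ (k + n0 + 1) / fact (k + n0 + 1))))"
      unfolding C_def z_def using assms(2,4,8) \<open>\<epsilon> > 0\<close>
      by (intro poisson_weighted_series_le[OF that assms(3)]) simp_all
    also have "\<dots> < ennreal \<epsilon>"
      unfolding add.assoc[of _ n0] by (rule tail) (simp add: n0_def)
    finally show ?thesis .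
  qed
  have rho_bounded: "AE y in rho. \<bar>y\<bar> \<le> d"
    using assms(6,9) by (rule AE_abs_le_of_measure_support)
  have support_bounded: "\<bar>x\<bar> \<le> d" if "x \<in> measure_support rho" for x
    using that assms(9) by (auto simp: abs_le_iff)
  have shifted_prob_space: "prob_space (return borel x \<star> conv_pow rho n)" for x n
    by (rule prob_space_convolution[OF prob_space_return prob_space_conv_pow[OF assms(5,6)]]) simp_all
  show "\<exists>n0::nat. n0 > 0 \<and>
     (\<forall>x\<in>measure_support rho.
        (\<Sum>k. ennreal (exp (-lam) * lam ^ (k + n0) / fact (k + n0 + 1)) *
           (\<integral>\<^sup>+ y. ennreal (\<bar>f y\<bar> + \<epsilon> + a * cosh (b * (2 * real n0 * d)))
              \<partial>(convolution (return borel x) (conv_pow rho (k + n0))))) < ennreal \<epsilon>) \<and>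
     (\<Sum>k. ennreal (exp (-lam) * lam ^ (k + n0) / fact (k + n0 + 1)) *
           (\<integral>\<^sup>+ y. ennreal (\<bar>f y\<bar> + \<epsilon> + a * cosh (b * (2 * real n0 * d)))
              \<partial>(conv_pow rho (k + n0 + 1)))) < ennreal \<epsilon>"
    apply (intro exI[of _ n0] conjI ballI)
    subgoal by (simp add: n0_def)
    subgoal for x
      by (rule series_less[of "\<lambda>k. return borel x \<star> conv_pow rho (k + n0)"],
          rule shifted_prob_space,
          erule AE_shifted_conv_pow_abs_le[OF assms(5,6) rho_bounded support_bounded])
    subgoal
      by (rule series_less[of "\<lambda>k. conv_pow rho (k + n0 + 1)"],
          rule prob_space_conv_pow[OF assms(5,6)],
          rule AE_conv_pow_abs_le[OF assms(5,6) rho_bounded])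
    done
qed

end
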